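(* Let $F$ be a Banach lattice, $H$ a Banach space and $T:F\to H$ bounded. The following are equivalent: (i) $T$ is DNS; (ii) there is no almost disjoint sequence $(f_n)\subset\mathrm{S}_F$ with $\|Tf_n\|\to0$; (iii) there is no non-dispersed closed subspace $E\subset F$ such that $T|_E$ is compact; (iv) there is no non-dispersed closed subspace $E\subset F$ such that $T|_E$ is strictly singular.
   Context: $\mathrm{S}_F$ is the unit sphere. A sequence $(e_n)\subset\mathrm{S}_F$ is almost disjoint if there is a disjoint sequence $(f_n)\subset F$ ($|f_n|\wedge|f_m|=0$, $n\ne m$) with $\|e_n-f_n\|\to0$. A closed subspace $E$ is dispersed if $\mathrm{S}_E$ contains no almost disjoint sequence. An operator is strictly singular if it is not bounded below on any infinite-dimensional subspace. $T$ is DNS if for every disjoint sequence of nonzero vectors $(f_n)$, $T$ restricted to $\overline{\mathrm{span}}\{f_n\}$ is not strictly singular. *)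

theory Defs
  imports "HOL-Analysis.Analysis"
begin

definition lmod :: "'a::{lattice, ab_group_add} \<Rightarrow> 'a" where
  "lmod x = sup x (- x)"

class banach_lattice = banach + ordered_real_vector + lattice +
  assumes lattice_norm_mono: "sup x (- x) \<le> sup y (- y) \<Longrightarrow> norm x \<le> norm y"

definition disjoint_seq :: "(nat \<Rightarrow> 'a::banach_lattice) \<Rightarrow> bool" where
  "disjoint_seq f \<longleftrightarrow> (\<forall>n m. n \<noteq> m \<longrightarrow> inf (lmod (f n)) (lmod (f m)) = 0)"

definition almost_disjoint :: "(nat \<Rightarrow> 'a::banach_lattice) \<Rightarrow> bool" where
  "almost_disjoint e \<longleftrightarrow> (\<forall>n. e n \<in> sphere 0 1) \<and>
     (\<exists>f. disjoint_seq f \<and> (\<lambda>n. norm (e n - f n)) \<longlonglongrightarrow> 0)"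

definition closed_subspace :: "'a::real_normed_vector set \<Rightarrow> bool" where
  "closed_subspace E \<longleftrightarrow> subspace E \<and> closed E"

definition dispersed :: "'a::banach_lattice set \<Rightarrow> bool" where
  "dispersed E \<longleftrightarrow> \<not> (\<exists>e. (\<forall>n. e n \<in> E) \<and> almost_disjoint e)"

definition infinite_dimensional :: "'a::real_vector set \<Rightarrow> bool" where
  "infinite_dimensional Y \<longleftrightarrow> \<not> (\<exists>B. finite B \<and> Y \<subseteq> span B)"

definition bounded_below_on :: "'a::real_normed_vector set \<Rightarrow> ('a \<Rightarrow> 'b::real_normed_vector) \<Rightarrow> bool" where
  "bounded_below_on Y T \<longleftrightarrow> (\<exists>c>0. \<forall>y\<in>Y. c * norm y \<le> norm (T y))"

definition strictly_singular_on :: "'a::real_normed_vector set \<Rightarrow> ('a \<Rightarrow> 'b::real_normed_vector) \<Rightarrow> bool" where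
  "strictly_singular_on E T \<longleftrightarrow>
     (\<forall>Y. subspace Y \<and> Y \<subseteq> E \<and> infinite_dimensional Y \<longrightarrow> \<not> bounded_below_on Y T)"

definition compact_on :: "'a::real_normed_vector set \<Rightarrow> ('a \<Rightarrow> 'b::real_normed_vector) \<Rightarrow> bool" where
  "compact_on E T \<longleftrightarrow> compact (closure (T ` (E \<inter> cball 0 1)))"

definition DNS :: "('a::banach_lattice \<Rightarrow> 'b::real_normed_vector) \<Rightarrow> bool" where
  "DNS T \<longleftrightarrow> (\<forall>f. disjoint_seq f \<and> (\<forall>n. f n \<noteq> 0) \<longrightarrow>
      \<not> strictly_singular_on (closure (span (range f))) T)"

end

theory Submission
  imports Defs "HOL-Library.Lattice_Algebras"
begin

text \<open>
  A unit sequence close to a disjoint sequence \<open>f\<close> behaves, along a fast enough subsequence,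
  like \<open>f\<close> itself: the coefficients of a finite combination are bounded by three times its
  norm, and the combination stays close to the corresponding combination of the \<open>f k\<close>.
  Hence, if \<open>T\<close> is strictly singular on a subspace containing an almost disjoint sequence,
  the spans of its tails are infinite dimensional and contain unit vectors with arbitrarily
  small image; taken on pairwise disjoint blocks, they form an almost disjoint sequence that
  \<open>T\<close> sends to zero. Conversely, if \<open>T\<close> sends an almost disjoint sequence to zero, a
  subsequence \<open>g\<close> of the nearby disjoint sequence satisfies \<open>\<parallel>g k\<parallel> \<ge> 1/2\<close> and
  \<open>\<parallel>T (g k)\<parallel> \<le> 2\<^sup>-\<^sup>k\<close>. Disjointness bounds the coefficients of unit vectors of its span
  by 2, so the image of the unit ball is uniformly approximated by compact sets of finite
  combinations and \<open>T\<close> is compact on the closed span of \<open>g\<close>, which is not dispersed. Compact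
  restrictions are strictly singular by a Riesz-type argument, which closes the cycle.
\<close>

context banach_lattice begin
subclass lattice_ab_group_add ..
end

subsection \<open>Disjointness in vector lattices\<close>

lemma lmod_nonneg: "0 \<le> lmod (x::'a::banach_lattice)"
proof -
  have "x \<le> lmod x" "- x \<le> lmod x" by (auto simp: lmod_def)
  then have "x + - x \<le> lmod x + lmod x" by (rule add_mono)
  then show ?thesis by simp
qed

lemma lmod_minus [simp]: "lmod (- x) = lmod (x::'a::banach_lattice)"
  by (simp add: lmod_def sup_commute)

lemma lmod_add_le: "lmod (x + y) \<le> lmod x + lmod (y::'a::banach_lattice)"
proof -
  have "x + y \<le> lmod x + lmod y" by (intro add_mono) (auto simp: lmod_def)
  moreover have "- (x + y) \<le> lmod x + lmod y"
    using add_mono[of "-x" "lmod x" "-y" "lmod y"] by (auto simp: lmod_def)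
  ultimately show ?thesis by (simp add: lmod_def)
qed

lemma lmod_sum_le: "finite F \<Longrightarrow> lmod (\<Sum>k\<in>F. x k) \<le> (\<Sum>k\<in>F. lmod (x k :: 'a::banach_lattice))"
proof (induction F rule: finite_induct)
  case (insert k F)
  then show ?case by (simp add: order_trans[OF lmod_add_le add_left_mono])
qed (simp add: lmod_def)

lemma norm_le_if_lmod_le: "lmod x \<le> lmod y \<Longrightarrow> norm x \<le> norm (y::'a::banach_lattice)"
  using lattice_norm_mono by (simp add: lmod_def)

lemma scaleR_sup_pos: "0 < c \<Longrightarrow> c *\<^sub>R sup a b = sup (c *\<^sub>R a) (c *\<^sub>R (b::'a::banach_lattice))"
proof (rule antisym)
  assume c: "0 < c"
  show "sup (c *\<^sub>R a) (c *\<^sub>R b) \<le> c *\<^sub>R sup a b"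
    using c by (auto intro!: scaleR_left_mono)
  let ?s = "sup (c *\<^sub>R a) (c *\<^sub>R b)"
  have "a \<le> (1/c) *\<^sub>R ?s" "b \<le> (1/c) *\<^sub>R ?s"
    using scaleR_left_mono[of "c *\<^sub>R a" ?s "1/c"] scaleR_left_mono[of "c *\<^sub>R b" ?s "1/c"] c
    by simp_all
  then have "sup a b \<le> (1/c) *\<^sub>R ?s" by simp
  then show "c *\<^sub>R sup a b \<le> ?s"
    using scaleR_left_mono[of "sup a b" "(1/c) *\<^sub>R ?s" c] c by simp
qed

lemma scaleR_inf_pos: "0 < c \<Longrightarrow> c *\<^sub>R inf a b = inf (c *\<^sub>R a) (c *\<^sub>R (b::'a::banach_lattice))"
proof (rule antisym)
  assume c: "0 < c"
  show "c *\<^sub>R inf a b \<le> inf (c *\<^sub>R a) (c *\<^sub>R b)"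
    using c by (auto intro!: scaleR_left_mono)
  let ?s = "inf (c *\<^sub>R a) (c *\<^sub>R b)"
  have "(1/c) *\<^sub>R ?s \<le> a" "(1/c) *\<^sub>R ?s \<le> b"
    using scaleR_left_mono[of ?s "c *\<^sub>R a" "1/c"] scaleR_left_mono[of ?s "c *\<^sub>R b" "1/c"] c
    by simp_all
  then have "(1/c) *\<^sub>R ?s \<le> inf a b" by simp
  then show "?s \<le> c *\<^sub>R inf a b"
    using scaleR_left_mono[of "(1/c) *\<^sub>R ?s" "inf a b" c] c by simp
qed

lemma lmod_scaleR: "lmod (c *\<^sub>R x) = \<bar>c\<bar> *\<^sub>R lmod (x::'a::banach_lattice)"
proof -
  have pos: "lmod (c *\<^sub>R x) = c *\<^sub>R lmod x" if "0 < c" for c and x :: 'a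
    using that by (simp add: lmod_def scaleR_sup_pos)
  consider "c = 0" | "c > 0" | "c < 0" by linarith
  then show ?thesis
  proof cases
    case 1
    then show ?thesis by (simp add: lmod_def)
  next
    case 2
    then show ?thesis by (simp add: pos)
  next
    case 3
    then have "lmod ((-c) *\<^sub>R (-x)) = (-c) *\<^sub>R lmod (-x)" by (intro pos) simp
    then show ?thesis using 3 by simp
  qed
qed

lemma inf_add_right_le:
  fixes a b c :: "'a::banach_lattice"
  assumes "0 \<le> a" "0 \<le> b" "0 \<le> c"
  shows "inf a (b + c) \<le> inf a b + inf a c"
proof -
  let ?d = "inf a (b + c)"
  have "?d - inf a b = sup (?d - a) (?d - b)"
    by (simp add: diff_inf_eq_sup add_sup_distrib_left)
  also have "\<dots> \<le> inf a c"
  proof (rule sup_least)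
    have "?d - a \<le> 0" by simp
    also have "0 \<le> inf a c" using assms by simp
    finally show "?d - a \<le> inf a c" .
    have "?d - b \<le> c"
      by (metis add.commute diff_le_eq inf.cobounded2)
    moreover have "?d - b \<le> a"
      using assms(2) by (metis diff_le_eq inf.coboundedI1 add_increasing2 order_refl)
    ultimately show "?d - b \<le> inf a c" by simp
  qed
  finally have "?d - inf a b \<le> inf a c" .
  then show ?thesis by (metis diff_le_eq add.commute)
qed

lemma inf_eq_0_mono:
  fixes a b c :: "'a::banach_lattice"
  assumes "0 \<le> a" "0 \<le> c" "c \<le> b" "inf a b = 0"
  shows "inf a c = 0"
proof (rule antisym)
  have "inf a c \<le> inf a b" using assms(3) by (simp add: inf.coboundedI2)
  then show "inf a c \<le> 0" using assms(4) by simp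
qed (use assms in simp)

lemma inf_scaleR_left_eq_0:
  fixes a b :: "'a::banach_lattice"
  assumes "0 \<le> a" "0 \<le> b" "inf a b = 0" "0 \<le> p"
  shows "inf (p *\<^sub>R a) b = 0"
proof -
  define q where "q = max p 1"
  have q: "q > 0" "p \<le> q" "1 \<le> q" by (auto simp: q_def)
  have "inf (p *\<^sub>R a) b \<le> inf (q *\<^sub>R a) (q *\<^sub>R b)"
    using q assms scaleR_right_mono[of 1 q b] by (intro inf_mono scaleR_right_mono) auto
  also have "\<dots> = q *\<^sub>R inf a b" by (rule scaleR_inf_pos[OF q(1), symmetric])
  also have "\<dots> = 0" using assms by simp
  finally show ?thesis using assms by (intro antisym) (auto intro: scaleR_nonneg_nonneg)
qed

lemma inf_lmod_scaleR_eq_0: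
  fixes x y :: "'a::banach_lattice"
  assumes "inf (lmod x) (lmod y) = 0"
  shows "inf (lmod (s *\<^sub>R x)) (lmod (t *\<^sub>R y)) = 0"
proof -
  have "inf (\<bar>s\<bar> *\<^sub>R lmod x) (lmod y) = 0"
    using inf_scaleR_left_eq_0[OF lmod_nonneg lmod_nonneg assms] by simp
  then have "inf (\<bar>t\<bar> *\<^sub>R lmod y) (\<bar>s\<bar> *\<^sub>R lmod x) = 0"
    by (intro inf_scaleR_left_eq_0) (auto simp: inf_commute lmod_nonneg scaleR_nonneg_nonneg)
  then show ?thesis by (simp add: lmod_scaleR inf_commute)
qed

lemma inf_sum_left_eq_0:
  fixes w :: "'a::banach_lattice"
  assumes "finite F" "0 \<le> w" "\<And>k. k \<in> F \<Longrightarrow> 0 \<le> p k \<and> inf (p k) w = 0"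
  shows "inf (\<Sum>k\<in>F. p k) w = 0"
  using assms
proof (induction F rule: finite_induct)
  case empty then show ?case by (simp add: inf_absorb1)
next
  case (insert k F)
  have IH: "inf (\<Sum>k\<in>F. p k) w = 0" and pk: "0 \<le> p k" "inf (p k) w = 0"
    using insert by auto
  have S: "0 \<le> (\<Sum>k\<in>F. p k)" using insert by (auto intro: sum_nonneg)
  have "inf w (p k + (\<Sum>k\<in>F. p k)) \<le> inf w (p k) + inf w (\<Sum>k\<in>F. p k)"
    using insert pk S by (intro inf_add_right_le) auto
  also have "\<dots> = 0" using IH pk by (simp add: inf_commute)
  finally have "inf (p k + (\<Sum>k\<in>F. p k)) w \<le> 0" by (simp add: inf_commute)
  moreover have "0 \<le> inf (p k + (\<Sum>k\<in>F. p k)) w" using pk S insert by simp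
  ultimately have "inf (p k + (\<Sum>k\<in>F. p k)) w = 0" by (rule antisym)
  then show ?case using insert by simp
qed

lemma inf_lmod_disjoint_sums_eq_0:
  fixes f :: "nat \<Rightarrow> 'a::banach_lattice"
  assumes "disjoint_seq f" "finite A" "finite B" "A \<inter> B = {}"
  shows "inf (lmod (\<Sum>k\<in>A. a k *\<^sub>R f k)) (lmod (\<Sum>j\<in>B. b j *\<^sub>R f j)) = 0"
proof -
  have pair: "inf (lmod (a k *\<^sub>R f k)) (lmod (b j *\<^sub>R f j)) = 0" if "k \<in> A" "j \<in> B" for k j
  proof -
    have "k \<noteq> j" using that assms(4) by auto
    then show ?thesis using assms(1) by (intro inf_lmod_scaleR_eq_0) (auto simp: disjoint_seq_def)
  qed
  have one: "inf (lmod (a k *\<^sub>R f k)) (lmod (\<Sum>j\<in>B. b j *\<^sub>R f j)) = 0" if "k \<in> A" for k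
  proof -
    have "inf (\<Sum>j\<in>B. lmod (b j *\<^sub>R f j)) (lmod (a k *\<^sub>R f k)) = 0"
      using pair that assms by (intro inf_sum_left_eq_0) (auto simp: lmod_nonneg inf_commute)
    then show ?thesis
      by (intro inf_eq_0_mono[OF lmod_nonneg lmod_nonneg lmod_sum_le[OF assms(3)]])
         (simp add: inf_commute)
  qed
  have "inf (\<Sum>k\<in>A. lmod (a k *\<^sub>R f k)) (lmod (\<Sum>j\<in>B. b j *\<^sub>R f j)) = 0"
    using one assms by (intro inf_sum_left_eq_0) (auto simp: lmod_nonneg)
  then have "inf (lmod (\<Sum>j\<in>B. b j *\<^sub>R f j)) (lmod (\<Sum>k\<in>A. a k *\<^sub>R f k)) = 0"
    by (intro inf_eq_0_mono[OF lmod_nonneg lmod_nonneg lmod_sum_le[OF assms(2)]])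
       (simp add: inf_commute)
  then show ?thesis by (simp add: inf_commute)
qed

lemma lmod_le_lmod_add:
  fixes x y :: "'a::banach_lattice"
  assumes "inf (lmod x) (lmod y) = 0"
  shows "lmod x \<le> lmod (x + y)"
proof -
  have "lmod x = lmod ((x + y) + (- y))" by simp
  also have "\<dots> \<le> lmod (x + y) + lmod y" using lmod_add_le[of "x + y" "- y"] by simp
  finally have "lmod x - lmod y \<le> lmod (x + y)" by (simp add: diff_le_eq)
  have "lmod x = lmod x - inf (lmod x) (lmod y)" using assms by simp
  also have "\<dots> = sup (lmod x - lmod x) (lmod x - lmod y)"
    by (simp add: diff_inf_eq_sup add_sup_distrib_left)
  also have "\<dots> \<le> lmod (x + y)" using \<open>lmod x - lmod y \<le> lmod (x + y)\<close> lmod_nonneg by simp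
  finally show ?thesis .
qed

lemma norm_coeff_le_norm_disjoint_sum:
  fixes f :: "nat \<Rightarrow> 'a::banach_lattice"
  assumes "disjoint_seq f" "finite F" "k \<in> F"
  shows "norm (a k *\<^sub>R f k) \<le> norm (\<Sum>j\<in>F. a j *\<^sub>R f j)"
proof -
  have eq: "(\<Sum>j\<in>F. a j *\<^sub>R f j) = (\<Sum>j\<in>{k}. a j *\<^sub>R f j) + (\<Sum>j\<in>F-{k}. a j *\<^sub>R f j)"
    using assms by (simp add: sum.remove)
  have "inf (lmod (\<Sum>j\<in>{k}. a j *\<^sub>R f j)) (lmod (\<Sum>j\<in>F-{k}. a j *\<^sub>R f j)) = 0"
    using assms by (intro inf_lmod_disjoint_sums_eq_0) auto
  then have "lmod (a k *\<^sub>R f k) \<le> lmod (\<Sum>j\<in>F. a j *\<^sub>R f j)"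
    unfolding eq using lmod_le_lmod_add by fastforce
  then show ?thesis by (rule norm_le_if_lmod_le)
qed

lemma disjoint_seq_scaleR: "disjoint_seq f \<Longrightarrow> disjoint_seq (\<lambda>n. c n *\<^sub>R f n)"
  unfolding disjoint_seq_def by (auto intro: inf_lmod_scaleR_eq_0)

lemma disjoint_seq_comp: "disjoint_seq f \<Longrightarrow> inj r \<Longrightarrow> disjoint_seq (f \<circ> r)"
  unfolding disjoint_seq_def by (auto simp: inj_eq)

lemma disjoint_seq_block_sums:
  assumes "disjoint_seq f" "\<And>j. finite (B j)" "\<And>i j. i \<noteq> j \<Longrightarrow> B i \<inter> B j = {}"
  shows "disjoint_seq (\<lambda>j. \<Sum>k\<in>B j. a j k *\<^sub>R f k)"
  unfolding disjoint_seq_def using assms by (metis inf_lmod_disjoint_sums_eq_0)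

lemma almost_disjoint_normalize:
  assumes "disjoint_seq f" "\<And>n. f n \<noteq> 0"
  shows "almost_disjoint (\<lambda>n. (1 / norm (f n)) *\<^sub>R f n)"
  unfolding almost_disjoint_def using assms disjoint_seq_scaleR[OF assms(1)]
  by (auto intro!: exI[of _ "\<lambda>n. (1 / norm (f n)) *\<^sub>R f n"])

subsection \<open>Subspaces, spans and compactness in normed spaces\<close>

lemma subspace_closure:
  fixes S :: "'a::real_normed_vector set"
  assumes S: "subspace S"
  shows "subspace (closure S)"
  unfolding subspace_def
proof (intro conjI ballI allI)
  show "0 \<in> closure S" using S closure_subset subspace_0 by blast
  fix x y assume "x \<in> closure S" "y \<in> closure S"
  then obtain xs ys where "\<forall>n. xs n \<in> S" "xs \<longlonglongrightarrow> x" "\<forall>n. ys n \<in> S" "ys \<longlonglongrightarrow> y"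
    by (auto simp: closure_sequential)
  then show "x + y \<in> closure S" unfolding closure_sequential
    by (intro exI[of _ "\<lambda>n. xs n + ys n"]) (auto intro: tendsto_add subspace_add[OF S])
next
  fix c x assume "x \<in> closure S"
  then obtain xs where "\<forall>n. xs n \<in> S" "xs \<longlonglongrightarrow> x"
    by (auto simp: closure_sequential)
  then show "c *\<^sub>R x \<in> closure S" unfolding closure_sequential
    by (intro exI[of _ "\<lambda>n. c *\<^sub>R xs n"]) (auto intro: tendsto_scaleR subspace_scale[OF S])
qed

lemma closed_subspace_closure_span: "closed_subspace (closure (span S))"
  by (simp add: closed_subspace_def subspace_closure)

lemma not_dispersed_closure_span:
  assumes "disjoint_seq f" "\<And>n. f n \<noteq> 0"
  shows "\<not> dispersed (closure (span (range f)))"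
proof -
  have "(1 / norm (f n)) *\<^sub>R f n \<in> closure (span (range f))" for n
    by (intro subsetD[OF closure_subset] span_scale span_base rangeI)
  then show ?thesis unfolding dispersed_def using almost_disjoint_normalize[OF assms]
    by (auto intro!: exI[of _ "\<lambda>n. (1 / norm (f n)) *\<^sub>R f n"])
qed

lemma closure_subspace_Int_cball:
  fixes S :: "'a::real_normed_vector set"
  assumes "subspace S" "0 < r"
  shows "closure S \<inter> cball 0 r \<subseteq> closure (S \<inter> cball 0 r)"
proof
  fix x assume x: "x \<in> closure S \<inter> cball 0 r"
  then obtain xs where xs: "\<And>n. xs n \<in> S" "xs \<longlonglongrightarrow> x"
    by (auto simp: closure_sequential)
  define ys where "ys n = (r / max r (norm (xs n))) *\<^sub>R xs n" for n
  have "ys n \<in> S \<inter> cball 0 r" for n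
  proof -
    have "norm (ys n) = r / max r (norm (xs n)) * norm (xs n)"
      using assms(2) by (simp add: ys_def)
    also have "\<dots> \<le> r" using assms(2) by (simp add: divide_le_eq max_def)
    finally show ?thesis using xs(1) assms(1) by (simp add: ys_def subspace_scale)
  qed
  moreover have "ys \<longlonglongrightarrow> (r / max r (norm x)) *\<^sub>R x"
    unfolding ys_def using xs(2) assms(2) by (intro tendsto_intros) auto
  moreover have "max r (norm x) = r" using x by auto
  then have "(r / max r (norm x)) *\<^sub>R x = x" using assms(2) by simp
  ultimately show "x \<in> closure (S \<inter> cball 0 r)"
    unfolding closure_sequential by metis
qed

lemma span_image_eq_sum:
  assumes "x \<in> span (g ` I)"
  shows "\<exists>F a. finite F \<and> F \<subseteq> I \<and> x = (\<Sum>k\<in>F. a k *\<^sub>R g k)"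
proof -
  from assms obtain t r where t: "finite t" "t \<subseteq> g ` I" "x = (\<Sum>v\<in>t. r v *\<^sub>R v)"
    by (auto simp: span_explicit)
  from t(2) obtain F where F: "F \<subseteq> I" "inj_on g F" "t = g ` F"
    unfolding subset_image_inj by blast
  have "x = (\<Sum>k\<in>F. r (g k) *\<^sub>R g k)" using t(3) F(2,3) by (simp add: sum.reindex)
  moreover have "finite F" using t(1) F(2,3) by (simp add: finite_image_iff)
  ultimately show ?thesis using F(1) by (intro exI[of _ F] exI[of _ "\<lambda>k. r (g k)"]) simp
qed

lemma infdist_span_le:
  fixes S :: "'a::real_normed_vector set"
  assumes "s \<in> span S"
  shows "\<bar>t\<bar> * infdist b (span S) \<le> norm (s + t *\<^sub>R b)"
proof (cases "t = 0")
  case False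
  have "infdist b (span S) \<le> dist b ((- 1 / t) *\<^sub>R s)"
    by (intro infdist_le span_scale assms)
  also have "\<dots> = norm (s + t *\<^sub>R b) / \<bar>t\<bar>"
    using False by (simp add: dist_norm norm_minus_commute field_simps flip: norm_scaleR)
  finally show ?thesis using False by (simp add: pos_le_divide_eq mult.commute)
qed simp

lemma closed_span_finite:
  fixes B :: "'a::real_normed_vector set"
  assumes "finite B"
  shows "closed (span B)"
  using assms
proof (induction B rule: finite_induct)
  case (insert b S)
  show ?case
  proof (cases "b \<in> span S")
    case True
    then show ?thesis using insert by (simp add: span_redundant)
  next
    case False
    define d where "d = infdist b (span S)"
    have d: "d > 0"
      unfolding d_def using insert.IH False span_zero by (intro infdist_pos_not_in_closed) auto
    show ?thesis unfolding closed_sequential_limits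
    proof (intro allI impI, elim conjE)
      fix x l assume xs: "\<forall>n. x n \<in> span (insert b S)" and lim: "x \<longlonglongrightarrow> l"
      have "\<forall>n. \<exists>t. x n - t *\<^sub>R b \<in> span S" using xs by (simp add: span_insert)
      then obtain t where t: "\<And>n. x n - t n *\<^sub>R b \<in> span S" by metis
      have "Cauchy t"
      proof (rule metric_CauchyI)
        fix e :: real assume "e > 0"
        then have "e * d > 0" using d by simp
        then obtain M where M: "\<forall>m\<ge>M. \<forall>n\<ge>M. dist (x m) (x n) < e * d"
          using metric_CauchyD[OF LIMSEQ_imp_Cauchy[OF lim]] by blast
        have "dist (t m) (t n) < e" if "m \<ge> M" "n \<ge> M" for m n
        proof -
          have "\<bar>t m - t n\<bar> * d \<le> norm ((x m - t m *\<^sub>R b - (x n - t n *\<^sub>R b)) + (t m - t n) *\<^sub>R b)"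
            unfolding d_def by (intro infdist_span_le span_diff t)
          also have "\<dots> = dist (x m) (x n)" by (simp add: dist_norm algebra_simps)
          also have "\<dots> < e * d" using M that by simp
          finally show ?thesis using d by (simp add: dist_real_def)
        qed
        then show "\<exists>M. \<forall>m\<ge>M. \<forall>n\<ge>M. dist (t m) (t n) < e" by blast
      qed
      then obtain \<tau> where \<tau>: "t \<longlonglongrightarrow> \<tau>" using Cauchy_convergent_iff convergent_def by blast
      have "(\<lambda>n. x n - t n *\<^sub>R b) \<longlonglongrightarrow> l - \<tau> *\<^sub>R b" by (intro tendsto_intros lim \<tau>)
      with insert.IH t have "l - \<tau> *\<^sub>R b \<in> span S" by (rule closed_sequentially)
      then show "l \<in> span (insert b S)" by (auto simp: span_insert)
    qed
  qed
qed simp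

lemma infinite_dimensional_span_if_independent:
  assumes "infinite I"
    and indep: "\<And>F a k. finite F \<Longrightarrow> F \<subseteq> I \<Longrightarrow> (\<Sum>k\<in>F. a k *\<^sub>R x k) = 0 \<Longrightarrow> k \<in> F \<Longrightarrow> a k = 0"
  shows "infinite_dimensional (span (x ` I))"
  unfolding infinite_dimensional_def
proof (rule notI, elim exE conjE)
  fix B assume B: "finite B" "span (x ` I) \<subseteq> span B"
  obtain J where J: "finite J" "card J = card B + 1" "J \<subseteq> I"
    using infinite_arbitrarily_large[OF assms(1)] by blast
  have inj: "inj_on x J"
  proof (rule inj_onI, rule ccontr)
    fix j k assume jk: "j \<in> J" "k \<in> J" "x j = x k" "j \<noteq> k"
    have "(\<Sum>i\<in>{j, k}. (if i = j then 1 else - 1 :: real) *\<^sub>R x i) = 0" using jk by simp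
    then have "(if j = j then 1 else - 1 :: real) = 0" using jk J by (intro indep[of "{j, k}"]) auto
    then show False by simp
  qed
  have "independent (x ` J)"
  proof (rule independent_if_scalars_zero)
    fix c v assume sum0: "(\<Sum>v\<in>x ` J. c v *\<^sub>R v) = 0" and "v \<in> x ` J"
    then obtain k where k: "k \<in> J" "v = x k" by auto
    have "(\<Sum>k\<in>J. c (x k) *\<^sub>R x k) = 0" using sum0 by (simp add: sum.reindex[OF inj])
    then have "c (x k) = 0" by (rule indep[OF J(1) J(3) _ k(1)])
    then show "c v = 0" using k(2) by simp
  qed (use J in simp)
  moreover have "x ` J \<subseteq> span B" using B(2) J(3) span_superset by blast
  ultimately have "card (x ` J) \<le> card B" using independent_span_bound[OF B(1)] by blast
  then show False using card_image[OF inj] J(2) by simp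
qed

lemma compact_image_finite_net:
  assumes "compact K" "f ` S \<subseteq> K" "e > 0"
  shows "\<exists>B. finite B \<and> B \<subseteq> S \<and> (\<forall>y\<in>S. \<exists>b\<in>B. dist (f y) (f b) < e)"
proof -
  obtain k where k: "finite k" "K \<subseteq> (\<Union>x\<in>k. ball x (e/2))"
    using assms(1,3) unfolding compact_eq_totally_bounded by (meson half_gt_zero)
  define k' where "k' = {x\<in>k. \<exists>y\<in>S. dist x (f y) < e/2}"
  have "\<forall>x\<in>k'. \<exists>y. y \<in> S \<and> dist x (f y) < e/2" unfolding k'_def by blast
  then obtain c where c: "\<And>x. x \<in> k' \<Longrightarrow> c x \<in> S \<and> dist x (f (c x)) < e/2"
    by (metis bchoice)
  have "\<exists>b\<in>c ` k'. dist (f y) (f b) < e" if y: "y \<in> S" for y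
  proof -
    from y assms(2) k obtain x where x: "x \<in> k" "dist x (f y) < e/2" by fastforce
    then have "x \<in> k'" using y k'_def by auto
    then show ?thesis using c[of x] x dist_triangle3[of "f y" "f (c x)" x] by force
  qed
  moreover have "finite (c ` k')" using k by (simp add: k'_def)
  ultimately show ?thesis using c by (intro exI[of _ "c ` k'"]) auto
qed

lemma compact_bounded_combinations:
  fixes v :: "nat \<Rightarrow> 'a::real_normed_vector"
  shows "compact {(\<Sum>j<N. b j *\<^sub>R v j) | b. \<forall>j<N. \<bar>b j\<bar> \<le> c}"
proof (induction N)
  case 0
  have "{(\<Sum>j<0. b j *\<^sub>R v j) | b::nat \<Rightarrow> real. \<forall>j<0. \<bar>b j\<bar> \<le> c} = {0}" by auto
  then show ?case by simp
next
  case (Suc N)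
  let ?H = "{(\<Sum>j<N. b j *\<^sub>R v j) | b. \<forall>j<N. \<bar>b j\<bar> \<le> c}"
  let ?L = "(\<lambda>t. t *\<^sub>R v N) ` {-c..c}"
  have "{(\<Sum>j<Suc N. b j *\<^sub>R v j) | b. \<forall>j<Suc N. \<bar>b j\<bar> \<le> c} = {x + y | x y. x \<in> ?H \<and> y \<in> ?L}"
  proof (intro set_eqI iffI)
    fix z assume "z \<in> {(\<Sum>j<Suc N. b j *\<^sub>R v j) | b. \<forall>j<Suc N. \<bar>b j\<bar> \<le> c}"
    then obtain b where b: "\<forall>j<Suc N. \<bar>b j\<bar> \<le> c" "z = (\<Sum>j<N. b j *\<^sub>R v j) + b N *\<^sub>R v N"
      by auto
    have H: "(\<Sum>j<N. b j *\<^sub>R v j) \<in> ?H" using b(1) by auto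
    have "b N \<in> {-c..c}" using b(1) by (auto simp: abs_le_iff)
    then have L: "b N *\<^sub>R v N \<in> ?L" by (rule imageI)
    show "z \<in> {x + y | x y. x \<in> ?H \<and> y \<in> ?L}" using H L b(2) by blast
  next
    fix z assume "z \<in> {x + y | x y. x \<in> ?H \<and> y \<in> ?L}"
    then obtain x y where xy: "z = x + y" "x \<in> ?H" "y \<in> ?L" by blast
    from xy(2) obtain b where b: "\<forall>j<N. \<bar>b j\<bar> \<le> c" "x = (\<Sum>j<N. b j *\<^sub>R v j)" by blast
    from xy(3) obtain t where t: "t \<in> {-c..c}" "y = t *\<^sub>R v N" by blast
    have "(\<Sum>j<N. (b(N := t)) j *\<^sub>R v j) = (\<Sum>j<N. b j *\<^sub>R v j)" by (intro sum.cong) auto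
    then have z: "z = (\<Sum>j<Suc N. (b(N := t)) j *\<^sub>R v j)" using xy(1) b(2) t(2) by simp
    have "\<forall>j<Suc N. \<bar>(b(N := t)) j\<bar> \<le> c" using b(1) t(1) by (auto simp: less_Suc_eq)
    with z show "z \<in> {(\<Sum>j<Suc N. b j *\<^sub>R v j) | b. \<forall>j<Suc N. \<bar>b j\<bar> \<le> c}" by blast
  qed
  moreover have "compact ?L" by (intro compact_continuous_image continuous_intros) auto
  ultimately show ?case using compact_sums[OF Suc.IH] by simp
qed

lemma compact_closure_if_approximable:
  fixes S :: "'a::{metric_space, complete_space} set"
  assumes "\<And>e. e > 0 \<Longrightarrow> \<exists>K. compact K \<and> (\<forall>x\<in>S. \<exists>y\<in>K. dist x y \<le> e)"
  shows "compact (closure S)"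
  unfolding compact_eq_totally_bounded
proof (intro conjI allI impI)
  show "complete (closure S)" by (simp add: complete_eq_closed)
  fix e :: real assume e: "e > 0"
  then have e3: "e/3 > 0" by simp
  then obtain K where K: "compact K" "\<forall>x\<in>S. \<exists>y\<in>K. dist x y \<le> e/3"
    using assms by blast
  obtain k where k: "finite k" "K \<subseteq> (\<Union>x\<in>k. ball x (e/3))"
    using K(1) e3 unfolding compact_eq_totally_bounded by blast
  have "S \<subseteq> (\<Union>x\<in>k. cball x (2*e/3))"
  proof
    fix z assume "z \<in> S"
    then obtain y where y: "y \<in> K" "dist z y \<le> e/3" using K(2) by blast
    then obtain x where "x \<in> k" "y \<in> ball x (e/3)" using k(2) by blast
    then have x: "x \<in> k" "dist x y < e/3" by simp_all
    have "dist x z \<le> dist x y + dist y z" by (rule dist_triangle)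
    then have "z \<in> cball x (2*e/3)" using x(2) y(2) by (simp add: dist_commute)
    then show "z \<in> (\<Union>x\<in>k. cball x (2*e/3))" using x(1) by blast
  qed
  then have "closure S \<subseteq> (\<Union>x\<in>k. cball x (2*e/3))"
    using k(1) by (intro closure_minimal closed_UN) auto
  also have "\<dots> \<subseteq> (\<Union>x\<in>k. ball x e)"
    using e by (intro UN_mono) (auto simp: subset_eq)
  finally show "\<exists>k. finite k \<and> closure S \<subseteq> (\<Union>x\<in>k. ball x e)" using k(1) by blast
qed

subsection \<open>Compact operators are strictly singular\<close>

lemma half_net_iterate:
  fixes Y :: "'a::real_normed_vector set"
  assumes Y: "subspace Y" and B: "B \<subseteq> Y"
    and net: "\<And>y. y \<in> Y \<Longrightarrow> norm y \<le> 1 \<Longrightarrow> \<exists>b\<in>B. norm (y - b) < 1/2"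
    and y: "y \<in> Y" "norm y \<le> 1"
  shows "\<exists>v\<in>span B. norm (y - v) \<le> (1/2)^n"
proof (induction n)
  case 0
  then show ?case using y by (intro bexI[of _ 0]) (auto simp: span_zero)
next
  case (Suc n)
  then obtain v where v: "v \<in> span B" "norm (y - v) \<le> (1/2)^n" by blast
  define z where "z = 2^n *\<^sub>R (y - v)"
  have "span B \<subseteq> Y" using B Y by (rule span_minimal)
  then have "z \<in> Y" unfolding z_def using y v Y by (auto intro: subspace_diff subspace_scale)
  moreover have "norm z \<le> 1"
    using v(2) unfolding z_def norm_scaleR by (simp add: power_one_over field_simps)
  ultimately obtain b where b: "b \<in> B" "norm (z - b) < 1/2" using net by blast
  have "y - (v + (1/2)^n *\<^sub>R b) = (1/2)^n *\<^sub>R (z - b)"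
    unfolding z_def by (simp add: algebra_simps power_one_over)
  then have "norm (y - (v + (1/2)^n *\<^sub>R b)) \<le> (1/2)^Suc n" using b(2) by simp
  moreover have "v + (1/2)^n *\<^sub>R b \<in> span B" using v b by (auto intro: span_add span_scale span_base)
  ultimately show ?case by blast
qed

lemma subspace_subset_span_if_half_net:
  fixes Y :: "'a::real_normed_vector set"
  assumes Y: "subspace Y" and B: "finite B" "B \<subseteq> Y"
    and net: "\<And>y. y \<in> Y \<Longrightarrow> norm y \<le> 1 \<Longrightarrow> \<exists>b\<in>B. norm (y - b) < 1/2"
  shows "Y \<subseteq> span B"
proof -
  have unit: "y \<in> span B" if y: "y \<in> Y" "norm y \<le> 1" for y
  proof -
    have "y \<in> closure (span B)" unfolding closure_approachable
    proof (intro allI impI)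
      fix e :: real assume "e > 0"
      then obtain n where n: "(1/2::real)^n < e" using real_arch_pow_inv[of e "1/2"] by auto
      obtain v where "v \<in> span B" "norm (y - v) \<le> (1/2)^n"
        using half_net_iterate[OF Y B(2) net y] by blast
      then show "\<exists>v\<in>span B. dist v y < e"
        using n by (intro bexI[of _ v]) (auto simp: dist_norm norm_minus_commute)
    qed
    then show ?thesis using closed_span_finite[OF B(1)] by (simp add: closure_closed)
  qed
  show ?thesis
  proof
    fix y assume y: "y \<in> Y"
    show "y \<in> span B"
    proof (cases "y = 0")
      case False
      have "(1 / norm y) *\<^sub>R y \<in> span B" using y Y False by (intro unit subspace_scale) auto
      then have "norm y *\<^sub>R ((1 / norm y) *\<^sub>R y) \<in> span B" by (rule span_scale)
      then show ?thesis using False by simp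
    qed (simp add: span_zero)
  qed
qed

lemma compact_on_imp_strictly_singular_on:
  fixes T :: "'a::real_normed_vector \<Rightarrow> 'b::real_normed_vector"
  assumes T: "bounded_linear T" and C: "compact_on E T"
  shows "strictly_singular_on E T"
  unfolding strictly_singular_on_def
proof (intro allI impI notI, elim conjE)
  fix Y assume Y: "subspace Y" "Y \<subseteq> E" "infinite_dimensional Y" and "bounded_below_on Y T"
  then obtain c where c: "c > 0" "\<And>y. y \<in> Y \<Longrightarrow> c * norm y \<le> norm (T y)"
    by (auto simp: bounded_below_on_def)
  have "T ` (Y \<inter> cball 0 1) \<subseteq> closure (T ` (E \<inter> cball 0 1))"
    using Y(2) closure_subset by fastforce
  with C c obtain B where B: "finite B" "B \<subseteq> Y \<inter> cball 0 1"
    and near: "\<forall>y\<in>Y \<inter> cball 0 1. \<exists>b\<in>B. dist (T y) (T b) < c/2"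
    unfolding compact_on_def using compact_image_finite_net[of _ T "Y \<inter> cball 0 1" "c/2"]
    by (metis half_gt_zero)
  have "\<exists>b\<in>B. norm (y - b) < 1/2" if "y \<in> Y" "norm y \<le> 1" for y
  proof -
    have "y \<in> Y \<inter> cball 0 1" using that by simp
    then obtain b where b: "b \<in> B" "dist (T y) (T b) < c/2" using near by blast
    have "c * norm (y - b) \<le> norm (T (y - b))"
      using that b B(2) Y(1) by (intro c(2) subspace_diff) auto
    also have "\<dots> < c * (1/2)" using b T by (simp add: dist_norm linear_diff bounded_linear.linear)
    finally show ?thesis using b c(1) by (auto simp: mult_less_cancel_left_pos)
  qed
  then have "Y \<subseteq> span B" using B by (intro subspace_subset_span_if_half_net Y(1)) auto
  then show False using Y(3) B(1) by (auto simp: infinite_dimensional_def)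
qed

lemma strictly_singular_on_small_unit_vector:
  assumes T: "bounded_linear T" and "strictly_singular_on E T"
    and "subspace Y" "Y \<subseteq> E" "infinite_dimensional Y" "\<epsilon> > 0"
  shows "\<exists>y\<in>Y. norm y = 1 \<and> norm (T y) < \<epsilon>"
proof -
  have "\<not> bounded_below_on Y T" using assms unfolding strictly_singular_on_def by blast
  with \<open>\<epsilon> > 0\<close> obtain y where y: "y \<in> Y" "norm (T y) < \<epsilon> * norm y"
    unfolding bounded_below_on_def by (meson not_le)
  then have "y \<noteq> 0" by auto
  have "norm (T ((1 / norm y) *\<^sub>R y)) = norm (T y) / norm y"
    using T by (simp add: linear_scale bounded_linear.linear)
  also have "\<dots> < \<epsilon>" using y \<open>y \<noteq> 0\<close> by (simp add: divide_less_eq)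
  finally show ?thesis
    using y(1) \<open>y \<noteq> 0\<close> \<open>subspace Y\<close> by (intro bexI[of _ "(1 / norm y) *\<^sub>R y"]) (auto intro: subspace_scale)
qed

subsection \<open>Perturbations of disjoint sequences\<close>

lemma strict_mono_eventually_choice:
  fixes P :: "nat \<Rightarrow> nat \<Rightarrow> bool"
  assumes "\<And>k. eventually (P k) sequentially"
  shows "\<exists>r. strict_mono r \<and> (\<forall>k. P k (r k))"
proof -
  have "\<forall>k. \<exists>M. \<forall>n\<ge>M. P k n" using assms by (simp add: eventually_sequentially)
  then obtain M where M: "\<And>k n. n \<ge> M k \<Longrightarrow> P k n" by metis
  define r where "r k = (\<Sum>i\<le>k. M i) + k" for k
  have "strict_mono r" unfolding strict_mono_Suc_iff r_def by simp
  moreover have "M k \<le> r k" for k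
    unfolding r_def using member_le_sum[of k "{..k}" M] by auto
  ultimately show ?thesis using M by blast
qed

lemma sum_half_power_le:
  assumes "finite F" "F \<subseteq> {N..}"
  shows "(\<Sum>k\<in>F. (1/2::real)^k) \<le> 2 * (1/2)^N"
proof -
  define M where "M = Max (insert N F)"
  have "(\<Sum>k\<in>F. (1/2::real)^k) \<le> (\<Sum>k=N..M. (1/2)^k)"
    using assms by (intro sum_mono2) (auto simp: M_def)
  also have "\<dots> \<le> 2 * (1/2)^N"
  proof -
    have "N \<le> M" using assms(1) by (simp add: M_def)
    then have eq: "(1 - 1/2) * (\<Sum>k=N..M. (1/2::real)^k) = (1/2)^N - (1/2)^Suc M"
      by (rule sum_gp_multiplied)
    have "(1 - 1/2) * (\<Sum>k=N..M. (1/2::real)^k) \<le> (1/2)^N" unfolding eq by simp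
    then show ?thesis by simp
  qed
  finally show ?thesis .
qed

lemma disjoint_blocks_subseq:
  fixes F :: "nat \<Rightarrow> nat set"
  assumes "\<And>N. finite (F N)" "\<And>N. F N \<subseteq> {N..}"
  shows "\<exists>s::nat \<Rightarrow> nat. strict_mono s \<and> (\<forall>i j. i \<noteq> j \<longrightarrow> F (s i) \<inter> F (s j) = {})"
proof -
  define s where "s = rec_nat 0 (\<lambda>_ n. Suc (Max (insert n (F n))))"
  have s_Suc: "s (Suc j) = Suc (Max (insert (s j) (F (s j))))" for j by (simp add: s_def)
  have block: "F (s j) \<subseteq> {s j..<s (Suc j)}" for j
  proof
    fix k assume k: "k \<in> F (s j)"
    then have "s j \<le> k" using assms(2) by auto
    moreover have "k \<le> Max (insert (s j) (F (s j)))" using assms(1) k by simp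
    ultimately show "k \<in> {s j..<s (Suc j)}" unfolding s_Suc by simp
  qed
  have mono: "strict_mono s" by (simp add: strict_mono_Suc_iff s_Suc le_imp_less_Suc assms(1))
  have disj: "F (s i) \<inter> F (s j) = {}" if "i < j" for i j
  proof -
    have "s (Suc i) \<le> s j" using that mono by (simp add: strict_mono_less_eq)
    then show ?thesis using block[of i] block[of j] by fastforce
  qed
  have "F (s i) \<inter> F (s j) = {}" if "i \<noteq> j" for i j
    using that disj[of i j] disj[of j i] by (cases "i < j") auto
  with mono show ?thesis by auto
qed

lemma disjoint_perturbation_bounds:
  fixes e f :: "nat \<Rightarrow> 'a::banach_lattice"
  assumes "disjoint_seq f" "finite F" "\<And>k. k \<in> F \<Longrightarrow> 1/2 \<le> norm (f k)"
    and small: "(\<Sum>k\<in>F. norm (e k - f k)) \<le> 1/8"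
  shows "\<forall>k\<in>F. \<bar>a k\<bar> \<le> 3 * norm (\<Sum>k\<in>F. a k *\<^sub>R e k)"
    and "norm ((\<Sum>k\<in>F. a k *\<^sub>R e k) - (\<Sum>k\<in>F. a k *\<^sub>R f k))
           \<le> 3 * norm (\<Sum>k\<in>F. a k *\<^sub>R e k) * (\<Sum>k\<in>F. norm (e k - f k))"
proof -
  let ?x = "\<Sum>k\<in>F. a k *\<^sub>R e k"
  let ?y = "\<Sum>k\<in>F. a k *\<^sub>R f k"
  let ?D = "\<Sum>k\<in>F. norm (e k - f k)"
  have "(\<forall>k\<in>F. \<bar>a k\<bar> \<le> 3 * norm ?x) \<and> norm (?x - ?y) \<le> 3 * norm ?x * ?D"
  proof (cases "F = {}")
    case False
    define M where "M = Max ((\<lambda>k. \<bar>a k\<bar>) ` F)"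
    have M_ge: "\<And>k. k \<in> F \<Longrightarrow> \<bar>a k\<bar> \<le> M" unfolding M_def using assms(2) by simp
    have "M \<in> (\<lambda>k. \<bar>a k\<bar>) ` F" unfolding M_def using assms(2) False by (intro Max_in) auto
    then obtain k0 where k0: "k0 \<in> F" "M = \<bar>a k0\<bar>" by auto
    have "?x - ?y = (\<Sum>k\<in>F. a k *\<^sub>R (e k - f k))"
      by (simp add: sum_subtractf scaleR_diff_right)
    then have "norm (?x - ?y) \<le> (\<Sum>k\<in>F. \<bar>a k\<bar> * norm (e k - f k))"
      using norm_sum[of "\<lambda>k. a k *\<^sub>R (e k - f k)" F] by simp
    also have "\<dots> \<le> M * ?D"
      unfolding sum_distrib_left by (intro sum_mono mult_right_mono M_ge) auto
    finally have xy: "norm (?x - ?y) \<le> M * ?D" .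
    \<comment> \<open>The largest coefficient survives in the disjoint sum, and the perturbation is too small to cancel it.\<close>
    have "M * (1/2) \<le> \<bar>a k0\<bar> * norm (f k0)"
      unfolding k0(2) using assms(3)[OF k0(1)] by (intro mult_left_mono) auto
    also have "\<dots> = norm (a k0 *\<^sub>R f k0)" by simp
    also have "\<dots> \<le> norm ?y" by (rule norm_coeff_le_norm_disjoint_sum[OF assms(1,2) k0(1)])
    also have "\<dots> \<le> norm ?x + norm (?x - ?y)" by (metis norm_triangle_sub norm_minus_commute)
    also have "\<dots> \<le> norm ?x + M * (1/8)"
      using xy small k0(2) by (meson abs_ge_zero add_left_mono mult_left_mono order_trans)
    finally have M_le: "M \<le> 3 * norm ?x" using norm_ge_zero[of ?x] by linarith
    then show ?thesis
      using M_ge xy sum_nonneg[of F "\<lambda>k. norm (e k - f k)"]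
      by (meson norm_ge_zero mult_right_mono order_trans)
  qed simp
  then show "\<forall>k\<in>F. \<bar>a k\<bar> \<le> 3 * norm ?x" and "norm (?x - ?y) \<le> 3 * norm ?x * ?D" by auto
qed

definition fast_perturbation :: "(nat \<Rightarrow> 'a::banach_lattice) \<Rightarrow> (nat \<Rightarrow> 'a) \<Rightarrow> bool" where
  "fast_perturbation e f \<longleftrightarrow>
     disjoint_seq f \<and> (\<forall>k. norm (e k) = 1) \<and> (\<forall>k. norm (e k - f k) \<le> (1/2)^k / 16)"

lemma almost_disjoint_fast_perturbation_subseq:
  assumes "almost_disjoint e"
  shows "\<exists>r f. strict_mono r \<and> fast_perturbation (e \<circ> r) f"
proof -
  from assms obtain f where en: "\<And>n. norm (e n) = 1" and df: "disjoint_seq f"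
    and lim: "(\<lambda>n. norm (e n - f n)) \<longlonglongrightarrow> 0"
    by (auto simp: almost_disjoint_def)
  have "eventually (\<lambda>n. norm (e n - f n) < (1/2)^k / 16) sequentially" for k
    using lim by (intro order_tendstoD(2)) auto
  then obtain r where r: "strict_mono r" "\<And>k. norm (e (r k) - f (r k)) < (1/2)^k / 16"
    using strict_mono_eventually_choice[of "\<lambda>k n. norm (e n - f n) < (1/2)^k / 16"] by blast
  moreover have "disjoint_seq (f \<circ> r)"
    using df r(1) by (intro disjoint_seq_comp strict_mono_imp_inj_on)
  ultimately have "fast_perturbation (e \<circ> r) (f \<circ> r)"
    using en by (auto simp: fast_perturbation_def intro: less_imp_le)
  then show ?thesis using r(1) by blast
qed

lemma fast_perturbation_norm_ge:
  assumes "fast_perturbation e f"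
  shows "1/2 \<le> norm (f k)"
proof -
  have "(1/2::real)^k \<le> 1" by (simp add: power_le_one)
  moreover have "norm (e k - f k) \<le> (1/2)^k / 16" using assms by (simp add: fast_perturbation_def)
  ultimately have small: "norm (e k - f k) \<le> 1/16" by linarith
  have "norm (e k) \<le> norm (f k) + norm (e k - f k)"
    using norm_triangle_ineq[of "f k" "e k - f k"] by simp
  moreover have "norm (e k) = 1" using assms unfolding fast_perturbation_def by blast
  ultimately show ?thesis using small by linarith
qed

lemma fast_perturbation_tail_sum:
  assumes "fast_perturbation e f" "finite F" "F \<subseteq> {N..}"
  shows "(\<Sum>k\<in>F. norm (e k - f k)) \<le> (1/2)^N / 8"
proof -
  have "(\<Sum>k\<in>F. norm (e k - f k)) \<le> (\<Sum>k\<in>F. (1/2::real)^k) / 16"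
    unfolding sum_divide_distrib using assms(1) by (intro sum_mono) (simp add: fast_perturbation_def)
  also have "\<dots> \<le> (1/2)^N / 8" using sum_half_power_le[OF assms(2,3)] by simp
  finally show ?thesis .
qed

lemma fast_perturbation_bounds:
  assumes "fast_perturbation e f" "finite F" "F \<subseteq> {N..}"
  shows "\<forall>k\<in>F. \<bar>a k\<bar> \<le> 3 * norm (\<Sum>k\<in>F. a k *\<^sub>R e k)"
    and "norm ((\<Sum>k\<in>F. a k *\<^sub>R e k) - (\<Sum>k\<in>F. a k *\<^sub>R f k))
           \<le> norm (\<Sum>k\<in>F. a k *\<^sub>R e k) * (1/2)^N"
proof -
  have tail: "(\<Sum>k\<in>F. norm (e k - f k)) \<le> (1/2)^N / 8"
    using fast_perturbation_tail_sum[OF assms] .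
  moreover have "(1/2::real)^N \<le> 1" by (simp add: power_le_one)
  ultimately have small: "(\<Sum>k\<in>F. norm (e k - f k)) \<le> 1/8" by linarith
  have df: "disjoint_seq f" using assms(1) by (simp add: fast_perturbation_def)
  note bounds = disjoint_perturbation_bounds[OF df assms(2) fast_perturbation_norm_ge[OF assms(1)] small]
  show "\<forall>k\<in>F. \<bar>a k\<bar> \<le> 3 * norm (\<Sum>k\<in>F. a k *\<^sub>R e k)" by (rule bounds(1))
  have "norm ((\<Sum>k\<in>F. a k *\<^sub>R e k) - (\<Sum>k\<in>F. a k *\<^sub>R f k))
      \<le> 3 * norm (\<Sum>k\<in>F. a k *\<^sub>R e k) * (\<Sum>k\<in>F. norm (e k - f k))"
    by (rule bounds(2))
  also have "\<dots> \<le> 3 * norm (\<Sum>k\<in>F. a k *\<^sub>R e k) * ((1/2)^N / 8)"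
    using tail by (intro mult_left_mono) auto
  also have "\<dots> \<le> norm (\<Sum>k\<in>F. a k *\<^sub>R e k) * (1/2)^N" by simp
  finally show "norm ((\<Sum>k\<in>F. a k *\<^sub>R e k) - (\<Sum>k\<in>F. a k *\<^sub>R f k))
      \<le> norm (\<Sum>k\<in>F. a k *\<^sub>R e k) * (1/2)^N" .
qed

lemma fast_perturbation_span_tail_infinite_dimensional:
  assumes "fast_perturbation e f"
  shows "infinite_dimensional (span (e ` {N..}))"
proof (rule infinite_dimensional_span_if_independent)
  fix F a k assume "finite F" "F \<subseteq> {N..}" "(\<Sum>k\<in>F. a k *\<^sub>R e k) = 0" "k \<in> F"
  then show "a k = 0" using fast_perturbation_bounds(1)[OF assms, of F N a] by auto
qed (rule infinite_Ici)

lemma fast_perturbation_small_block: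
  assumes T: "bounded_linear T" and ss: "strictly_singular_on E T" and E: "subspace E"
    and eE: "range e \<subseteq> E" and fp: "fast_perturbation e f" and \<epsilon>: "\<epsilon> > 0"
  shows "\<exists>F a. finite F \<and> F \<subseteq> {N..} \<and> norm (\<Sum>k\<in>F. a k *\<^sub>R e k) = 1
    \<and> norm (T (\<Sum>k\<in>F. a k *\<^sub>R e k)) < \<epsilon>
    \<and> norm ((\<Sum>k\<in>F. a k *\<^sub>R e k) - (\<Sum>k\<in>F. a k *\<^sub>R f k)) \<le> (1/2)^N"
proof -
  have "span (e ` {N..}) \<subseteq> E" using eE E by (intro span_minimal) auto
  from strictly_singular_on_small_unit_vector[OF T ss subspace_span this
      fast_perturbation_span_tail_infinite_dimensional[OF fp] \<epsilon>]
  obtain x where x: "x \<in> span (e ` {N..})" "norm x = 1" "norm (T x) < \<epsilon>" by blast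
  from span_image_eq_sum[OF x(1)]
  obtain F a where F: "finite F" "F \<subseteq> {N..}" "x = (\<Sum>k\<in>F. a k *\<^sub>R e k)" by blast
  have "norm (x - (\<Sum>k\<in>F. a k *\<^sub>R f k)) \<le> norm x * (1/2)^N"
    unfolding F(3) by (rule fast_perturbation_bounds(2)[OF fp F(1,2)])
  then show ?thesis using F x by (intro exI[of _ F] exI[of _ a]) simp
qed

lemma strictly_singular_on_almost_disjoint_null:
  assumes T: "bounded_linear T" and E: "subspace E" and ss: "strictly_singular_on E T"
    and eE: "\<And>n. e n \<in> E" and ad: "almost_disjoint e"
  shows "\<exists>u. almost_disjoint u \<and> (\<lambda>n. norm (T (u n))) \<longlonglongrightarrow> 0"
proof -
  obtain r f where fp: "fast_perturbation (e \<circ> r) f"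
    using almost_disjoint_fast_perturbation_subseq[OF ad] by blast
  define Q where "Q N F a \<longleftrightarrow> finite F \<and> F \<subseteq> {N..}
      \<and> norm (\<Sum>k\<in>F. a k *\<^sub>R (e \<circ> r) k) = 1
      \<and> norm (T (\<Sum>k\<in>F. a k *\<^sub>R (e \<circ> r) k)) < (1/2)^N
      \<and> norm ((\<Sum>k\<in>F. a k *\<^sub>R (e \<circ> r) k) - (\<Sum>k\<in>F. a k *\<^sub>R f k)) \<le> (1/2)^N" for N F a
  have "range (e \<circ> r) \<subseteq> E" using eE by auto
  then have "\<forall>N. \<exists>F a. Q N F a"
    unfolding Q_def using fast_perturbation_small_block[OF T ss E _ fp] by simp
  then obtain F where "\<forall>N. \<exists>a. Q N (F N) a" by (metis choice)
  then obtain a where Fa: "\<forall>N. Q N (F N) (a N)" by (metis choice)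
  have F: "\<And>N. finite (F N)" "\<And>N. F N \<subseteq> {N..}"
    and a: "\<And>N. norm (\<Sum>k\<in>F N. a N k *\<^sub>R (e \<circ> r) k) = 1"
      "\<And>N. norm (T (\<Sum>k\<in>F N. a N k *\<^sub>R (e \<circ> r) k)) < (1/2)^N"
      "\<And>N. norm ((\<Sum>k\<in>F N. a N k *\<^sub>R (e \<circ> r) k) - (\<Sum>k\<in>F N. a N k *\<^sub>R f k)) \<le> (1/2)^N"
    using Fa unfolding Q_def by blast+
  obtain s :: "nat \<Rightarrow> nat" where s: "strict_mono s" "\<And>i j. i \<noteq> j \<Longrightarrow> F (s i) \<inter> F (s j) = {}"
    using disjoint_blocks_subseq[OF F] by blast
  define u where "u j = (\<Sum>k\<in>F (s j). a (s j) k *\<^sub>R (e \<circ> r) k)" for j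
  define v where "v j = (\<Sum>k\<in>F (s j). a (s j) k *\<^sub>R f k)" for j
  have geom: "(\<lambda>j. (1/2::real)^j) \<longlonglongrightarrow> 0" by (rule LIMSEQ_power_zero) simp
  have tail: "(1/2::real)^s j \<le> (1/2)^j" for j
    using strict_mono_imp_increasing[OF s(1)] by (simp add: power_decreasing)
  have "disjoint_seq f" using fp by (simp add: fast_perturbation_def)
  then have "disjoint_seq v" unfolding v_def using F(1) s(2) by (rule disjoint_seq_block_sums)
  moreover have "norm (u j - v j) \<le> (1/2)^j" for j
    unfolding u_def v_def by (rule order_trans[OF a(3) tail])
  then have "(\<lambda>j. norm (u j - v j)) \<longlonglongrightarrow> 0"
    by (intro Lim_null_comparison[OF _ geom] always_eventually allI) simp
  moreover have "u j \<in> sphere 0 1" for j using a(1) by (simp add: u_def)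
  ultimately have "almost_disjoint u" unfolding almost_disjoint_def by blast
  moreover have "norm (T (u j)) \<le> (1/2)^j" for j
    unfolding u_def by (rule order_trans[OF less_imp_le[OF a(2)] tail])
  then have "(\<lambda>j. norm (T (u j))) \<longlonglongrightarrow> 0"
    by (intro Lim_null_comparison[OF _ geom] always_eventually allI) simp
  ultimately show ?thesis by blast
qed

subsection \<open>Compactness on the span of a disjoint sequence\<close>

lemma image_near_bounded_combination:
  fixes T :: "'a::banach_lattice \<Rightarrow> 'b::real_normed_vector"
  assumes T: "bounded_linear T" and g: "disjoint_seq g" "\<And>k. 1/2 \<le> norm (g k)"
    and Tg: "\<And>k. norm (T (g k)) \<le> (1/2)^k"
    and x: "x \<in> span (range g)" "norm x \<le> 1"
  shows "\<exists>h\<in>{(\<Sum>j<N. b j *\<^sub>R T (g j)) | b. \<forall>j<N. \<bar>b j\<bar> \<le> 2}. norm (T x - h) \<le> 4 * (1/2)^N"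
proof -
  interpret T: bounded_linear T by fact
  obtain F a where F: "finite F" "x = (\<Sum>k\<in>F. a k *\<^sub>R g k)"
    using span_image_eq_sum[OF x(1)] by blast
  have a_le: "\<bar>a j\<bar> \<le> 2" if "j \<in> F" for j
  proof -
    have "\<bar>a j\<bar> * (1/2) \<le> \<bar>a j\<bar> * norm (g j)" using g(2) by (intro mult_left_mono) auto
    also have "\<dots> \<le> norm x"
      using norm_coeff_le_norm_disjoint_sum[OF g(1) F(1) that, of a] F(2) by simp
    finally show ?thesis using x(2) by simp
  qed
  define b where "b j = (if j \<in> F then a j else 0)" for j
  have "(\<Sum>j<N. b j *\<^sub>R T (g j)) = (\<Sum>j\<in>{..<N}. if j \<in> F then a j *\<^sub>R T (g j) else 0)"
    by (intro sum.cong) (auto simp: b_def)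
  also have "\<dots> = (\<Sum>j\<in>F \<inter> {..<N}. a j *\<^sub>R T (g j))"
    using sum.inter_restrict[of "{..<N}" "\<lambda>j. a j *\<^sub>R T (g j)" F] by (simp add: Int_commute)
  finally have head: "(\<Sum>j<N. b j *\<^sub>R T (g j)) = (\<Sum>j\<in>F \<inter> {..<N}. a j *\<^sub>R T (g j))" .
  have "T x = (\<Sum>j\<in>F \<inter> {..<N}. a j *\<^sub>R T (g j)) + (\<Sum>j\<in>F - {..<N}. a j *\<^sub>R T (g j))"
    by (simp add: F T.sum T.scaleR sum.Int_Diff)
  then have diff: "T x - (\<Sum>j<N. b j *\<^sub>R T (g j)) = (\<Sum>j\<in>F - {..<N}. a j *\<^sub>R T (g j))"
    by (simp add: head)
  have tail: "norm (\<Sum>j\<in>F - {..<N}. a j *\<^sub>R T (g j)) \<le> 4 * (1/2)^N"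
  proof -
    have "norm (\<Sum>j\<in>F - {..<N}. a j *\<^sub>R T (g j)) \<le> (\<Sum>j\<in>F - {..<N}. \<bar>a j\<bar> * norm (T (g j)))"
      using norm_sum[of "\<lambda>j. a j *\<^sub>R T (g j)"] by simp
    also have "\<dots> \<le> (\<Sum>j\<in>F - {..<N}. 2 * (1/2)^j)"
      using a_le Tg by (intro sum_mono mult_mono) auto
    also have "\<dots> \<le> 2 * (2 * (1/2)^N)"
      unfolding sum_distrib_left[symmetric] using F(1)
      by (intro mult_left_mono sum_half_power_le) auto
    finally show ?thesis by simp
  qed
  have "\<forall>j<N. \<bar>b j\<bar> \<le> 2" using a_le by (simp add: b_def)
  then have "(\<Sum>j<N. b j *\<^sub>R T (g j)) \<in> {(\<Sum>j<N. b j *\<^sub>R T (g j)) | b. \<forall>j<N. \<bar>b j\<bar> \<le> 2}"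
    by blast
  then show ?thesis using diff tail by (intro bexI[of _ "\<Sum>j<N. b j *\<^sub>R T (g j)"]) simp_all
qed

lemma compact_on_closure_span_disjoint:
  fixes T :: "'a::banach_lattice \<Rightarrow> 'b::banach"
  assumes T: "bounded_linear T" and g: "disjoint_seq g" "\<And>k. 1/2 \<le> norm (g k)"
    and Tg: "\<And>k. norm (T (g k)) \<le> (1/2)^k"
  shows "compact_on (closure (span (range g))) T"
proof -
  define S where "S = span (range g) \<inter> cball 0 1"
  have "compact (closure (T ` S))"
  proof (rule compact_closure_if_approximable)
    fix e :: real assume "e > 0"
    then obtain N where N: "(1/2::real)^N < e / 4" using real_arch_pow_inv[of "e/4" "1/2"] by auto
    let ?K = "{(\<Sum>j<N. b j *\<^sub>R T (g j)) | b. \<forall>j<N. \<bar>b j\<bar> \<le> 2}"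
    have near: "\<exists>h\<in>?K. dist y h \<le> e" if "y \<in> T ` S" for y
    proof -
      from that obtain x where x: "x \<in> span (range g)" "norm x \<le> 1" "y = T x" by (auto simp: S_def)
      from image_near_bounded_combination[OF T g Tg x(1,2)] obtain h
        where h: "h \<in> ?K" "norm (T x - h) \<le> 4 * (1/2)^N" ..
      have "dist y h \<le> e" using h(2) N x(3) by (simp add: dist_norm)
      with h(1) show ?thesis ..
    qed
    have "compact ?K" by (rule compact_bounded_combinations)
    with near show "\<exists>K. compact K \<and> (\<forall>y\<in>T ` S. \<exists>h\<in>K. dist y h \<le> e)" by blast
  qed
  moreover have "T ` (closure (span (range g)) \<inter> cball 0 1) \<subseteq> closure (T ` S)"
  proof -
    have "closure (span (range g)) \<inter> cball 0 1 \<subseteq> closure S"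
      unfolding S_def by (intro closure_subspace_Int_cball subspace_span) simp
    then have "T ` (closure (span (range g)) \<inter> cball 0 1) \<subseteq> T ` closure S" by blast
    also have "\<dots> \<subseteq> closure (T ` S)"
      using T by (intro image_closure_subset linear_continuous_on closed_closure closure_subset)
    finally show ?thesis .
  qed
  then have "closure (T ` (closure (span (range g)) \<inter> cball 0 1)) \<subseteq> closure (T ` S)"
    by (rule closure_minimal[OF _ closed_closure])
  then have "closure (T ` (closure (span (range g)) \<inter> cball 0 1))
      = closure (T ` S) \<inter> closure (T ` (closure (span (range g)) \<inter> cball 0 1))" by blast
  with compact_Int_closed[OF \<open>compact (closure (T ` S))\<close> closed_closure]
  show ?thesis unfolding compact_on_def by metis
qed

lemma almost_disjoint_null_image_disjoint_seq:
  fixes T :: "'a::banach_lattice \<Rightarrow> 'b::real_normed_vector"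
  assumes T: "bounded_linear T" and ad: "almost_disjoint e" and Te: "(\<lambda>n. norm (T (e n))) \<longlonglongrightarrow> 0"
  shows "\<exists>g. disjoint_seq g \<and> (\<forall>k. 1/2 \<le> norm (g k)) \<and> (\<forall>k. norm (T (g k)) \<le> (1/2)^k)"
proof -
  interpret T: bounded_linear T by fact
  obtain K where K: "\<And>x. norm (T x) \<le> norm x * K" using T.bounded by blast
  from ad obtain f where en: "\<And>n. norm (e n) = 1" and df: "disjoint_seq f"
    and lim: "(\<lambda>n. norm (e n - f n)) \<longlonglongrightarrow> 0"
    by (auto simp: almost_disjoint_def)
  have "norm (T (f n)) \<le> norm (T (e n)) + norm (e n - f n) * K" for n
  proof -
    have "T (f n) = T (e n) - T (e n - f n)" by (simp add: T.diff)
    then have "norm (T (f n)) \<le> norm (T (e n)) + norm (T (e n - f n))" by (metis norm_triangle_ineq4)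
    then show ?thesis using K[of "e n - f n"] by simp
  qed
  then have "(\<lambda>n. norm (T (f n))) \<longlonglongrightarrow> 0"
    by (intro Lim_null_comparison[OF always_eventually tendsto_add_zero[OF Te tendsto_mult_left_zero[OF lim, of K]]])
      simp
  then have "eventually (\<lambda>n. norm (e n - f n) < 1/2 \<and> norm (T (f n)) < (1/2)^k) sequentially" for k
    using lim by (intro eventually_conj order_tendstoD(2)) auto
  then obtain r where r: "strict_mono r"
    "\<And>k. norm (e (r k) - f (r k)) < 1/2 \<and> norm (T (f (r k))) < (1/2)^k"
    using strict_mono_eventually_choice[of "\<lambda>k n. norm (e n - f n) < 1/2 \<and> norm (T (f n)) < (1/2)^k"]
    by blast
  have "disjoint_seq (f \<circ> r)" using df r(1) by (intro disjoint_seq_comp strict_mono_imp_inj_on)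
  moreover have "1/2 \<le> norm ((f \<circ> r) k)" for k
    using norm_triangle_ineq[of "f (r k)" "e (r k) - f (r k)"] en[of "r k"] r(2)[of k] by simp
  moreover have "norm (T ((f \<circ> r) k)) \<le> (1/2)^k" for k
    using r(2)[of k] by (simp add: order.strict_implies_order)
  ultimately show ?thesis by blast
qed

lemma almost_disjoint_null_imp_compact_on_closure_span:
  fixes T :: "'a::banach_lattice \<Rightarrow> 'b::banach"
  assumes T: "bounded_linear T" and "almost_disjoint e" "(\<lambda>n. norm (T (e n))) \<longlonglongrightarrow> 0"
  shows "\<exists>g. disjoint_seq g \<and> (\<forall>n. g n \<noteq> 0) \<and> compact_on (closure (span (range g))) T"
proof -
  obtain g where g: "disjoint_seq g" "\<And>k. 1/2 \<le> norm (g k)" "\<And>k. norm (T (g k)) \<le> (1/2)^k"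
    using almost_disjoint_null_image_disjoint_seq[OF assms] by blast
  have "g n \<noteq> 0" for n using g(2)[of n] by auto
  then show ?thesis using g compact_on_closure_span_disjoint[OF T g] by blast
qed

lemma not_DNS_imp_almost_disjoint_null:
  assumes T: "bounded_linear T" and "\<not> DNS T"
  shows "\<exists>u. almost_disjoint u \<and> (\<lambda>n. norm (T (u n))) \<longlonglongrightarrow> 0"
proof -
  from assms(2) obtain f where f: "disjoint_seq f" "\<And>n. f n \<noteq> 0"
    and ss: "strictly_singular_on (closure (span (range f))) T"
    unfolding DNS_def by blast
  have "(1 / norm (f n)) *\<^sub>R f n \<in> closure (span (range f))" for n
    by (intro subsetD[OF closure_subset] span_scale span_base rangeI)
  then show ?thesis
    using strictly_singular_on_almost_disjoint_null[OF T _ ss _ almost_disjoint_normalize[OF f]]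
      closed_subspace_closure_span by (auto simp: closed_subspace_def)
qed

theorem mainTheorem9:
  fixes T :: "'a::banach_lattice \<Rightarrow> 'b::banach"
  assumes "bounded_linear T"
  shows "(DNS T \<longleftrightarrow> \<not> (\<exists>f. almost_disjoint f \<and> (\<lambda>n. norm (T (f n))) \<longlonglongrightarrow> 0))
    \<and> (\<not> (\<exists>f. almost_disjoint f \<and> (\<lambda>n. norm (T (f n))) \<longlonglongrightarrow> 0) \<longleftrightarrow>
         \<not> (\<exists>E. closed_subspace E \<and> \<not> dispersed E \<and> compact_on E T))
    \<and> (\<not> (\<exists>E. closed_subspace E \<and> \<not> dispersed E \<and> compact_on E T) \<longleftrightarrow>
         \<not> (\<exists>E. closed_subspace E \<and> \<not> dispersed E \<and> strictly_singular_on E T))"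
proof -
  let ?A = "\<exists>f. almost_disjoint f \<and> (\<lambda>n. norm (T (f n))) \<longlonglongrightarrow> 0"
  let ?C = "\<exists>E. closed_subspace E \<and> \<not> dispersed E \<and> compact_on E T"
  let ?S = "\<exists>E. closed_subspace E \<and> \<not> dispersed E \<and> strictly_singular_on E T"
  have "?C \<and> \<not> DNS T" if ?A
  proof -
    from that almost_disjoint_null_imp_compact_on_closure_span[OF assms] obtain g where
      g: "disjoint_seq g" "\<forall>n. g n \<noteq> 0" "compact_on (closure (span (range g))) T" by blast
    then have "\<not> DNS T" unfolding DNS_def using compact_on_imp_strictly_singular_on[OF assms] by blast
    then show ?thesis
      using g closed_subspace_closure_span not_dispersed_closure_span[OF g(1)] by blast
  qed
  moreover have ?A if ?S
    using that strictly_singular_on_almost_disjoint_null[OF assms]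
    by (auto simp: closed_subspace_def dispersed_def)
  moreover have "?C \<Longrightarrow> ?S" using compact_on_imp_strictly_singular_on[OF assms] by blast
  ultimately show ?thesis using not_DNS_imp_almost_disjoint_null[OF assms] by blast
qed

end
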